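(* Let $X_d=X^{\otimes d}$ and suppose $\sum_{k=1}^\infty\bar\lambda^X_k\mathbf 1(\bar\lambda^X_k<e^{-x})=\varphi(x)$, $x\ge0$, for some slowly varying function $\varphi$. Then $$\lim_{d\to\infty}d\,\varphi\bigl(\ln n^{X_d}(\varepsilon)\bigr)=-\ln(1-\varepsilon^2)\quad\text{for all }\varepsilon\in(0,1).$$
   Context: Let $X$ be a centered random element of a separable Hilbert space $H$ with $\mathbb E\|X\|^2<\infty$, covariance eigenvalues $\lambda^X_1\ge\lambda^X_2\ge\dots\ge0$ (with multiplicity, padded with zeros), $\lambda^X_1>0$, trace $\Lambda^X$, and $\bar\lambda^X_k=\lambda^X_k/\Lambda^X$. $X_d=X^{\otimes d}$ is the centered random element of $H^{\otimes d}$ with covariance operator $(K^X)^{\otimes d}$; its eigenvalues are $\prod_{j=1}^d\lambda^X_{k_j}$. With $\bar\lambda^{X_d}_k$ the normalized nonincreasing eigenvalues of $X_d$, $n^{X_d}(\varepsilon)=\min\{n\in\mathbb N:\sum_{k>n}\bar\lambda^{X_d}_k\le\varepsilon^2\}$. A slowly varying function is a positive measurable $\varphi$ on some $[T,\infty)$ with $\varphi(cx)/\varphi(x)\to1$ as $x\to\infty$ for every $c>0$. *)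

theory Defs
  imports "HOL-Analysis.Analysis" "HOL-Library.Equipollence"
begin

definition normalize_eigs :: "(nat \<Rightarrow> real) \<Rightarrow> nat \<Rightarrow> real" where
  "normalize_eigs lam k = lam k / (\<Sum>i. lam i)"

text \<open>Eigenvalues of the covariance of X^{tensor d}: indexed by multi-indices
  (lists of length d), the eigenvalue is the product of the factor eigenvalues.\<close>
definition tensor_eig :: "(nat \<Rightarrow> real) \<Rightarrow> nat list \<Rightarrow> real" where
  "tensor_eig lam ks = prod_list (map lam ks)"

definition multi_indices :: "nat \<Rightarrow> nat list set" where
  "multi_indices d = {ks. length ks = d}"

text \<open>mu is the nonincreasing arrangement (with multiplicity, padded by zeros)
  of the nonnegative family f on the index set A.\<close>
definition decr_arrangement :: "('a \<Rightarrow> real) \<Rightarrow> 'a set \<Rightarrow> (nat \<Rightarrow> real) \<Rightarrow> bool" where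
  "decr_arrangement f A mu \<longleftrightarrow> decseq mu \<and> (\<forall>k. 0 \<le> mu k) \<and>
     (\<forall>v>0. {k. mu k = v} \<approx> {a\<in>A. f a = v})"

text \<open>n(eps) = min { n : sum_{k>n} lambdabar_k <= eps^2 } (1-based indexing in the paper;
  here 0-based, so the tail after the first n terms is sum_k lambdabar (k+n)).\<close>
definition n_eps :: "(nat \<Rightarrow> real) \<Rightarrow> real \<Rightarrow> nat" where
  "n_eps lbar \<epsilon> = (LEAST n. (\<Sum>k. lbar (k + n)) \<le> \<epsilon>\<^sup>2)"

definition slowly_varying :: "(real \<Rightarrow> real) \<Rightarrow> bool" where
  "slowly_varying \<phi> \<longleftrightarrow> (\<exists>T. (\<forall>x\<ge>T. 0 < \<phi> x) \<and>
     \<phi> \<in> borel_measurable (restrict_space borel {T..}) \<and>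
     (\<forall>c>0. ((\<lambda>x. \<phi> (c * x) / \<phi> x) \<longlongrightarrow> 1) at_top))"

end

theory Submission
  imports Defs
begin

text \<open>
  Let p be the normalised eigenvalues of X, psi(x) the mass of the p k \<ge> exp(-x) (the head
  at level x) and phi(x) = 1 - psi(x) the remaining tail mass. The eigenvalues of X_d are the
  products p k1 \<dots> p kd over words of length d, and n(eps) is the number of largest ones
  needed to cover mass 1 - eps^2. The proof compares n(eps) with superlevel sets of the
  product weights:
  (1) at height v the superlevel set has at most 1/v elements and mass at most psi^d; since a
      decreasing arrangement lists exactly these elements first, exp(-t)-superlevel sets
      covering mass 1 - eps^2 give n(eps) \<le> exp t, and 1 - eps^2 \<le> n(eps) v + psi^d;
  (2) by Markov's inequality for the additive functional -ln of the product, the superlevel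
      set at height exp(-t) has mass at least psi(x)^d - d m(x) / t, where m(x) is the
      entropy of the head at level x.
  Slow variation of phi gives m(x) = O(x phi(x)) and x phi(x) \<rightarrow> \<infinity>. Taking
  v = 1/n(eps)^2 yields the upper bound on d phi(ln n(eps)); taking t = M N(d) with
  N(d) the least level where d phi \<le> b yields the lower bound.
\<close>

definition words :: "'a set \<Rightarrow> nat \<Rightarrow> 'a list set" where
  "words B d = {ks. set ks \<subseteq> B \<and> length ks = d}"

lemma words_0: "words B 0 = {[]}"
  unfolding words_def by auto

lemma words_Suc: "words B (Suc d) = (\<lambda>(k, ks). k # ks) ` (B \<times> words B d)"
  unfolding words_def by (auto simp: length_Suc_conv image_iff)

lemma words_Suc_inj: "inj_on (\<lambda>(k, ks). k # ks) (B \<times> words B d)"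
  by (auto simp: inj_on_def)

lemma finite_words: "finite B \<Longrightarrow> finite (words B d)"
  unfolding words_def by (rule finite_lists_length_eq)

lemma sum_words_Suc:
  fixes g :: "'a list \<Rightarrow> real"
  shows "(\<Sum>ks\<in>words B (Suc d). g ks) = (\<Sum>k\<in>B. \<Sum>ks\<in>words B d. g (k # ks))"
  unfolding words_Suc sum.reindex[OF words_Suc_inj] by (simp add: sum.cartesian_product case_prod_unfold)

lemma sum_words_tensor:
  fixes p :: "nat \<Rightarrow> real"
  shows "(\<Sum>ks\<in>words B d. tensor_eig p ks) = (\<Sum>k\<in>B. p k) ^ d"
proof (induction d)
  case (Suc d)
  then show ?case
    by (simp add: sum_words_Suc tensor_eig_def sum_distrib_left[symmetric] sum_distrib_right[symmetric])
qed (simp add: words_0 tensor_eig_def)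

lemma sum_words_tensor_additive:
  fixes p Y :: "nat \<Rightarrow> real"
  shows "(\<Sum>ks\<in>words B d. tensor_eig p ks * sum_list (map Y ks)) =
     real d * (\<Sum>k\<in>B. p k) ^ (d - 1) * (\<Sum>k\<in>B. p k * Y k)"
proof (induction d)
  case (Suc d)
  let ?S = "\<Sum>k\<in>B. p k" and ?M = "\<Sum>k\<in>B. p k * Y k"
  have "(\<Sum>ks\<in>words B (Suc d). tensor_eig p ks * sum_list (map Y ks))
      = (\<Sum>k\<in>B. \<Sum>ks\<in>words B d. p k * Y k * tensor_eig p ks + p k * (tensor_eig p ks * sum_list (map Y ks)))"
    by (simp add: sum_words_Suc tensor_eig_def algebra_simps)
  also have "\<dots> = ?M * ?S ^ d + ?S * (real d * ?S ^ (d - 1) * ?M)"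
    by (simp add: sum.distrib sum_distrib_left[symmetric] sum_distrib_right[symmetric]
        Suc.IH sum_words_tensor mult.commute)
  also have "\<dots> = real (Suc d) * ?S ^ (Suc d - 1) * ?M"
    by (cases d) (auto simp: algebra_simps)
  finally show ?case .
qed (simp add: words_0 tensor_eig_def)

lemma sum_level_const:
  "(\<Sum>x | x \<in> X \<and> g x = w. h (g x)) = real (card {x\<in>X. g x = w}) * (h w :: real)"
  by (simp add: sum.cong[of _ _ "\<lambda>_. h w"])

text \<open>Decreasing arrangements: a superlevel set of the arrangement q has the same
  level-by-level cardinalities as the corresponding superlevel set of the family f,
  hence it is finite and carries the same sums.\<close>
lemma arrangement_superlevel_sum:
  fixes f :: "'a \<Rightarrow> real" and h :: "real \<Rightarrow> real"
  assumes arr: "decr_arrangement f A q" and v: "0 < v"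
    and fin: "finite {a\<in>A. v \<le> f a}"
  shows "finite {k. v \<le> q k}"
    and "(\<Sum>k | v \<le> q k. h (q k)) = (\<Sum>a | a \<in> A \<and> v \<le> f a. h (f a))"
proof -
  define K where "K = {k. v \<le> q k}"
  define S where "S = {a\<in>A. v \<le> f a}"
  define W where "W = f ` S"
  have lev: "{k. q k = w} \<approx> {a\<in>A. f a = w}" if "0 < w" for w
    using arr that unfolding decr_arrangement_def by blast
  have level: "finite {k\<in>K. q k = w} \<and> card {k\<in>K. q k = w} = card {a\<in>S. f a = w}"
    if "v \<le> w" for w
  proof -
    have "{k\<in>K. q k = w} \<approx> {a\<in>S. f a = w}"
      using lev[of w] that v unfolding K_def S_def by (simp add: conj_commute cong: conj_cong)
    moreover have "finite {a\<in>S. f a = w}" using fin unfolding S_def by (rule rev_finite_subset) auto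
    ultimately show ?thesis using eqpoll_finite_iff eqpoll_iff_card by blast
  qed
  have img: "q ` K \<subseteq> W"
  proof
    fix w assume "w \<in> q ` K"
    then have w: "v \<le> w" "{k. q k = w} \<noteq> {}" unfolding K_def by auto
    then have "{a\<in>A. f a = w} \<noteq> {}"
      using lev[of w] v by (metis eqpoll_empty_iff_empty less_le_trans)
    then show "w \<in> W" using w unfolding W_def S_def by (auto intro: rev_image_eqI)
  qed
  have W_ge: "v \<le> w" if "w \<in> W" for w using that unfolding W_def S_def by auto
  have finW: "finite W" unfolding W_def S_def using fin by simp
  have "finite (\<Union>w\<in>W. {k\<in>K. q k = w})"
    using finW level W_ge by blast
  moreover have "K = (\<Union>w\<in>W. {k\<in>K. q k = w})" using img by blast
  ultimately have finK: "finite K" by simp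
  then show "finite {k. v \<le> q k}" unfolding K_def .
  have "(\<Sum>k\<in>K. h (q k)) = (\<Sum>w\<in>W. \<Sum>k | k \<in> K \<and> q k = w. h (q k))"
    by (rule sum.group[OF finK finW img, symmetric])
  also have "\<dots> = (\<Sum>w\<in>W. card {a\<in>S. f a = w} * h w)"
    unfolding sum_level_const using level W_ge by (intro sum.cong) auto
  also have "\<dots> = (\<Sum>w\<in>W. \<Sum>a | a \<in> S \<and> f a = w. h (f a))"
    unfolding sum_level_const ..
  also have "\<dots> = (\<Sum>a\<in>S. h (f a))"
    using fin by (intro sum.group) (auto simp: S_def W_def)
  finally show "(\<Sum>k | v \<le> q k. h (q k)) = (\<Sum>a | a \<in> A \<and> v \<le> f a. h (f a))"
    unfolding K_def S_def by simp
qed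

lemma arrangement_nonneg: "decr_arrangement f A q \<Longrightarrow> 0 \<le> q k"
  unfolding decr_arrangement_def by auto

lemma downclosed_eq_lessThan:
  fixes K :: "nat set"
  assumes "finite K" and "\<And>k j. k \<in> K \<Longrightarrow> j \<le> k \<Longrightarrow> j \<in> K"
  shows "K = {..<card K}"
proof (cases "K = {}")
  case False
  have "K = {..Max K}"
    using assms Max_in[OF assms(1) False] by (auto intro: Max_ge)
  then show ?thesis by (metis card_atMost lessThan_Suc_atMost)
qed simp

text \<open>Being nonincreasing, q lists its superlevel set first: it is an initial segment.\<close>
lemma arrangement_superlevel:
  fixes f :: "'a \<Rightarrow> real"
  assumes arr: "decr_arrangement f A q" and v: "0 < v"
    and fin: "finite {a\<in>A. v \<le> f a}"
  shows "{k. v \<le> q k} = {..<card {a\<in>A. v \<le> f a}}"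
proof -
  have "card {k. v \<le> q k} = card {a\<in>A. v \<le> f a}"
    using arrangement_superlevel_sum(2)[OF assms, of "\<lambda>_. 1"] by simp
  moreover have "{k. v \<le> q k} = {..<card {k. v \<le> q k}}"
  proof (rule downclosed_eq_lessThan[OF arrangement_superlevel_sum(1)[OF assms]])
    show "j \<in> {k. v \<le> q k}" if "k \<in> {k. v \<le> q k}" "j \<le> k" for k j
      using that arr unfolding decr_arrangement_def by (auto dest: decseqD intro: order_trans)
  qed
  ultimately show ?thesis by simp
qed

lemma n_eps_tail_iff:
  fixes q :: "nat \<Rightarrow> real"
  assumes "summable q" and "suminf q = 1"
  shows "(\<Sum>k. q (k + n)) \<le> \<epsilon>\<^sup>2 \<longleftrightarrow> 1 - \<epsilon>\<^sup>2 \<le> (\<Sum>k<n. q k)"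
  using suminf_split_initial_segment[OF assms(1), of n] assms(2) by linarith

lemma n_eps_covers:
  assumes "summable q" and "suminf q = 1" and "0 < \<epsilon>"
  shows "1 - \<epsilon>\<^sup>2 \<le> (\<Sum>k<n_eps q \<epsilon>. q k)"
proof -
  have "(\<lambda>n. \<Sum>k<n. q k) \<longlonglongrightarrow> 1"
    using summable_LIMSEQ[OF assms(1)] assms(2) by simp
  moreover have "1 - \<epsilon>\<^sup>2 < 1" using assms(3) by simp
  ultimately obtain n where "1 - \<epsilon>\<^sup>2 \<le> (\<Sum>k<n. q k)"
    by (metis (lifting) eventually_sequentially order.refl order_less_imp_le order_tendstoD(1))
  then show ?thesis
    unfolding n_eps_def n_eps_tail_iff[OF assms(1,2), symmetric] by (rule LeastI)
qed

lemma n_eps_le: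
  assumes "summable q" and "suminf q = 1" and "1 - \<epsilon>\<^sup>2 \<le> (\<Sum>k<m. q k)"
  shows "n_eps q \<epsilon> \<le> m"
  unfolding n_eps_def using assms n_eps_tail_iff by (intro Least_le) blast

definition tensor_superlevel :: "(nat \<Rightarrow> real) \<Rightarrow> nat \<Rightarrow> real \<Rightarrow> nat list set" where
  "tensor_superlevel p d v = {a \<in> multi_indices d. v \<le> tensor_eig p a}"

locale pos_prob_seq =
  fixes p :: "nat \<Rightarrow> real"
  assumes pos: "\<And>k. 0 < p k"
    and summable: "summable p"
    and sum_one: "suminf p = 1"
begin

lemma sum_le_one: "(\<Sum>k\<in>B. p k) \<le> 1"
proof (cases "finite B")
  case True
  then show ?thesis
    using sum_le_suminf[OF summable True] pos sum_one by (simp add: less_imp_le)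
qed simp

lemma le_one: "p k \<le> 1"
  using sum_le_one[of "{k}"] by simp

lemma finite_superlevel: "0 < v \<Longrightarrow> finite {k. v \<le> p k}"
proof -
  assume v: "0 < v"
  have "eventually (\<lambda>k. p k < v) sequentially"
    using summable_LIMSEQ_zero[OF summable] v by (rule order_tendstoD)
  then obtain K where "\<And>k. K \<le> k \<Longrightarrow> p k < v" by (auto simp: eventually_sequentially)
  then have "{k. v \<le> p k} \<subseteq> {..<K}" by (force simp: not_le[symmetric])
  then show ?thesis by (rule finite_subset) simp
qed

lemma tensor_pos: "0 < tensor_eig p ks"
  unfolding tensor_eig_def by (induction ks) (auto intro!: mult_pos_pos pos)

lemma tensor_le_one: "tensor_eig p ks \<le> 1"
  unfolding tensor_eig_def
  by (induction ks) (auto intro!: mult_le_one le_one less_imp_le[OF pos] prod_list_nonneg)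

lemma tensor_le_factor: "k \<in> set ks \<Longrightarrow> tensor_eig p ks \<le> p k"
proof (induction ks)
  case (Cons a ks)
  have "p a * tensor_eig p ks \<le> p k"
  proof (cases "k = a")
    case True
    then show ?thesis using tensor_le_one[of ks] pos[of a] by (simp add: mult_left_le)
  next
    case False
    then have "tensor_eig p ks \<le> p k" using Cons by simp
    then show ?thesis
      using le_one[of a] pos[of a] tensor_pos[of ks] by (meson less_imp_le mult_left_le_one_le order_trans)
  qed
  then show ?case by (simp add: tensor_eig_def)
qed simp

lemma tensor_superlevel_subset: "tensor_superlevel p d v \<subseteq> words {k. v \<le> p k} d"
  unfolding tensor_superlevel_def words_def multi_indices_def
  using tensor_le_factor order_trans by fastforce

lemma finite_tensor_superlevel: "0 < v \<Longrightarrow> finite (tensor_superlevel p d v)"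
  using tensor_superlevel_subset finite_words finite_superlevel finite_subset by metis

lemma tensor_superlevel_mass:
  assumes v: "0 < v"
  shows "(\<Sum>a\<in>tensor_superlevel p d v. tensor_eig p a) \<le> (\<Sum>k | v \<le> p k. p k) ^ d"
proof -
  have "(\<Sum>a\<in>tensor_superlevel p d v. tensor_eig p a) \<le> (\<Sum>a\<in>words {k. v \<le> p k} d. tensor_eig p a)"
    using tensor_superlevel_subset finite_words[OF finite_superlevel[OF v]]
    by (intro sum_mono2) (auto intro: less_imp_le tensor_pos)
  then show ?thesis by (simp add: sum_words_tensor)
qed

lemma tensor_superlevel_mass_le_one:
  "0 < v \<Longrightarrow> (\<Sum>a\<in>tensor_superlevel p d v. tensor_eig p a) \<le> 1"
  using tensor_superlevel_mass[of v d] sum_le_one[of "{k. v \<le> p k}"] pos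
  by (meson order_trans power_le_one sum_nonneg less_imp_le)

lemma card_tensor_superlevel: "0 < v \<Longrightarrow> v * card (tensor_superlevel p d v) \<le> 1"
proof -
  assume v: "0 < v"
  have "v * card (tensor_superlevel p d v) = (\<Sum>a\<in>tensor_superlevel p d v. v)" by simp
  also have "\<dots> \<le> (\<Sum>a\<in>tensor_superlevel p d v. tensor_eig p a)"
    by (intro sum_mono) (auto simp: tensor_superlevel_def)
  also have "\<dots> \<le> 1" by (rule tensor_superlevel_mass_le_one[OF v])
  finally show ?thesis .
qed

lemma tensor_arrangement_superlevel:
  assumes arr: "decr_arrangement (tensor_eig p) (multi_indices d) q" and v: "0 < v"
  shows "{k. v \<le> q k} = {..<card (tensor_superlevel p d v)}"
    and "(\<Sum>k<card (tensor_superlevel p d v). q k) = (\<Sum>a\<in>tensor_superlevel p d v. tensor_eig p a)"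
proof -
  have fin: "finite {a \<in> multi_indices d. v \<le> tensor_eig p a}"
    using finite_tensor_superlevel[OF v] unfolding tensor_superlevel_def .
  show lvl: "{k. v \<le> q k} = {..<card (tensor_superlevel p d v)}"
    using arrangement_superlevel[OF arr v fin] unfolding tensor_superlevel_def .
  show "(\<Sum>k<card (tensor_superlevel p d v). q k) = (\<Sum>a\<in>tensor_superlevel p d v. tensor_eig p a)"
    using arrangement_superlevel_sum(2)[OF arr v fin, of "\<lambda>x. x"]
    unfolding lvl[symmetric] by (simp add: tensor_superlevel_def)
qed

text \<open>Every initial segment of the positive part of q lies in some superlevel set, so its
  mass is at most one.\<close>
lemma tensor_arrangement_partial_sum_le_one:
  assumes arr: "decr_arrangement (tensor_eig p) (multi_indices d) q"
  shows "(\<Sum>k<n. q k) \<le> 1"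
proof -
  define S where "S = {k. k < n \<and> 0 < q k}"
  have nonneg: "0 \<le> q k" for k using arrangement_nonneg[OF arr] .
  have "(\<Sum>k<n. q k) = (\<Sum>k\<in>S. q k)"
    using nonneg by (intro sum.mono_neutral_right) (auto simp: S_def le_less)
  also have "\<dots> \<le> 1"
  proof (cases "S = {}")
    case False
    define v where "v = Min (q ` S)"
    have fin: "finite S" unfolding S_def by simp
    have v: "0 < v" unfolding v_def using fin False by (auto simp: S_def)
    have "S \<subseteq> {k. v \<le> q k}" unfolding v_def using fin by auto
    then have "S \<subseteq> {..<card (tensor_superlevel p d v)}"
      unfolding tensor_arrangement_superlevel(1)[OF arr v] .
    then have "(\<Sum>k\<in>S. q k) \<le> (\<Sum>k<card (tensor_superlevel p d v). q k)"
      using nonneg by (intro sum_mono2) auto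
    also have "\<dots> \<le> 1"
      using tensor_arrangement_superlevel(2)[OF arr v] tensor_superlevel_mass_le_one[OF v] by simp
    finally show ?thesis .
  qed simp
  finally show ?thesis .
qed

lemma tensor_arrangement_summable:
  "decr_arrangement (tensor_eig p) (multi_indices d) q \<Longrightarrow> summable q"
  by (rule summableI_nonneg_bounded[where x=1])
     (auto intro: arrangement_nonneg tensor_arrangement_partial_sum_le_one)

lemma tensor_arrangement_suminf:
  assumes arr: "decr_arrangement (tensor_eig p) (multi_indices d) q"
  shows "suminf q = 1"
proof (rule antisym)
  have summ: "summable q" by (rule tensor_arrangement_summable[OF arr])
  show "suminf q \<le> 1"
    by (rule suminf_le_const[OF summ tensor_arrangement_partial_sum_le_one[OF arr]])
  have box: "(\<Sum>k<K. p k) ^ d \<le> suminf q" for K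
  proof (cases "words {..<K} d = {}")
    case True
    then show ?thesis
      using sum_words_tensor[of p "{..<K}" d] suminf_nonneg[OF summ arrangement_nonneg[OF arr]]
      by (simp add: power_0_left)
  next
    case False
    let ?W = "words {..<K} d"
    define v where "v = Min (tensor_eig p ` ?W)"
    have finW: "finite ?W" by (simp add: finite_words)
    have v: "0 < v" unfolding v_def using finW False tensor_pos by simp
    have sub: "?W \<subseteq> tensor_superlevel p d v"
      unfolding tensor_superlevel_def v_def using finW by (auto simp: words_def multi_indices_def)
    have "(\<Sum>k<K. p k) ^ d = (\<Sum>a\<in>?W. tensor_eig p a)" by (simp add: sum_words_tensor)
    also have "\<dots> \<le> (\<Sum>a\<in>tensor_superlevel p d v. tensor_eig p a)"
      using finite_tensor_superlevel[OF v] sub by (intro sum_mono2) (auto intro: less_imp_le tensor_pos)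
    also have "\<dots> = (\<Sum>k<card (tensor_superlevel p d v). q k)"
      using tensor_arrangement_superlevel(2)[OF arr v] by simp
    also have "\<dots> \<le> suminf q"
      using summ arrangement_nonneg[OF arr] by (intro sum_le_suminf) auto
    finally show ?thesis .
  qed
  have "(\<lambda>K. (\<Sum>k<K. p k) ^ d) \<longlonglongrightarrow> 1 ^ d"
    using summable_LIMSEQ[OF summable] sum_one by (intro tendsto_power) simp
  then show "1 \<le> suminf q" using box by (intro LIMSEQ_le_const2[where a="suminf q"]) auto
qed

text \<open>Upper bound for n(eps): if the superlevel set at height exp(-t) already carries
  mass 1 - eps^2, then n(eps) is at most its cardinality, hence at most exp t.\<close>
lemma n_eps_le_exp:
  assumes arr: "decr_arrangement (tensor_eig p) (multi_indices d) q"
    and covers: "1 - \<epsilon>\<^sup>2 \<le> (\<Sum>a\<in>tensor_superlevel p d (exp (-t)). tensor_eig p a)"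
  shows "real (n_eps q \<epsilon>) \<le> exp t"
proof -
  have v: "0 < exp (-t)" by simp
  have "n_eps q \<epsilon> \<le> card (tensor_superlevel p d (exp (-t)))"
    using covers tensor_arrangement_superlevel(2)[OF arr v]
    by (intro n_eps_le tensor_arrangement_summable[OF arr] tensor_arrangement_suminf[OF arr]) simp
  moreover have "card (tensor_superlevel p d (exp (-t))) \<le> exp t"
    using card_tensor_superlevel[OF v] by (simp add: exp_minus field_simps)
  ultimately show ?thesis by linarith
qed

text \<open>Lower bound for n(eps): the first n(eps) weights carry mass at least 1 - eps^2,
  of which at most n(eps) v lies below height v.\<close>
lemma n_eps_lower:
  assumes arr: "decr_arrangement (tensor_eig p) (multi_indices d) q"
    and e: "0 < \<epsilon>" and v: "0 < v"
  shows "1 - \<epsilon>\<^sup>2 \<le> real (n_eps q \<epsilon>) * v + (\<Sum>a\<in>tensor_superlevel p d v. tensor_eig p a)"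
proof -
  let ?n = "n_eps q \<epsilon>"
  have nonneg: "0 \<le> q k" for k using arrangement_nonneg[OF arr] .
  have "(\<Sum>k<?n. q k) = (\<Sum>k\<in>{..<?n} \<inter> {k. v \<le> q k}. q k) + (\<Sum>k\<in>{..<?n} - {k. v \<le> q k}. q k)"
    by (simp add: sum.Int_Diff)
  also have "(\<Sum>k\<in>{..<?n} \<inter> {k. v \<le> q k}. q k) \<le> (\<Sum>k\<in>{k. v \<le> q k}. q k)"
    using nonneg by (intro sum_mono2) (auto simp: tensor_arrangement_superlevel(1)[OF arr v])
  also have "\<dots> = (\<Sum>a\<in>tensor_superlevel p d v. tensor_eig p a)"
    using tensor_arrangement_superlevel[OF arr v] by simp
  also have "(\<Sum>k\<in>{..<?n} - {k. v \<le> q k}. q k) \<le> (\<Sum>k\<in>{..<?n} - {k. v \<le> q k}. v)"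
    by (intro sum_mono) auto
  also have "\<dots> \<le> real ?n * v"
    using v card_mono[of "{..<?n}" "{..<?n} - {k. v \<le> q k}"]
    by (simp add: mult_right_mono)
  finally have "(\<Sum>k<?n. q k) \<le> (\<Sum>a\<in>tensor_superlevel p d v. tensor_eig p a) + real ?n * v" by simp
  moreover have "1 - \<epsilon>\<^sup>2 \<le> (\<Sum>k<?n. q k)"
    by (rule n_eps_covers[OF tensor_arrangement_summable[OF arr] tensor_arrangement_suminf[OF arr] e])
  ultimately show ?thesis by linarith
qed

definition head :: "real \<Rightarrow> nat set" where "head s = {k. exp (-s) \<le> p k}"
definition head_mass :: "real \<Rightarrow> real" where "head_mass s = (\<Sum>k\<in>head s. p k)"
definition head_entropy :: "real \<Rightarrow> real" where
  "head_entropy s = (\<Sum>k\<in>head s. p k * - ln (p k))"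

lemma finite_head: "finite (head s)"
  unfolding head_def by (rule finite_superlevel) simp

lemma head_mono: "s \<le> t \<Longrightarrow> head s \<subseteq> head t"
  unfolding head_def by (auto intro: order_trans[rotated])

lemma head_mass_nonneg: "0 \<le> head_mass s"
  unfolding head_mass_def by (simp add: sum_nonneg less_imp_le pos)

lemma head_mass_le_one: "head_mass s \<le> 1"
  unfolding head_mass_def by (rule sum_le_one)

lemma head_mass_mono: "s \<le> t \<Longrightarrow> head_mass s \<le> head_mass t"
  unfolding head_mass_def using head_mono finite_head
  by (intro sum_mono2) (auto intro: less_imp_le pos)

lemma neg_ln_nonneg: "0 \<le> - ln (p k)"
  using pos[of k] le_one[of k] by simp

lemma head_entropy_nonneg: "0 \<le> head_entropy s"
  unfolding head_entropy_def using neg_ln_nonneg pos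
  by (intro sum_nonneg mult_nonneg_nonneg) (auto simp: less_imp_le)

lemma head_neg_ln_le: "k \<in> head s \<Longrightarrow> p k * - ln (p k) \<le> p k * s"
proof -
  assume "k \<in> head s"
  then have "ln (exp (-s)) \<le> ln (p k)" unfolding head_def using pos[of k] by (subst ln_le_cancel_iff) auto
  then show ?thesis using pos[of k] by (intro mult_left_mono) auto
qed

lemma head_entropy_le: "0 \<le> s \<Longrightarrow> head_entropy s \<le> s"
proof -
  assume s: "0 \<le> s"
  have "head_entropy s \<le> (\<Sum>k\<in>head s. p k * s)"
    unfolding head_entropy_def by (intro sum_mono head_neg_ln_le)
  also have "\<dots> = head_mass s * s" unfolding head_mass_def by (simp add: sum_distrib_right)
  also have "\<dots> \<le> s" using head_mass_le_one head_mass_nonneg s by (simp add: mult_left_le_one_le)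
  finally show ?thesis .
qed

lemma tensor_superlevel_mass_head:
  "(\<Sum>a\<in>tensor_superlevel p d (exp (-s)). tensor_eig p a) \<le> head_mass s ^ d"
  using tensor_superlevel_mass[of "exp (-s)" d] by (simp add: head_mass_def head_def)

lemma tensor_eig_exp: "tensor_eig p ks = exp (- sum_list (map (\<lambda>k. - ln (p k)) ks))"
  unfolding tensor_eig_def
  by (induction ks) (auto simp: exp_diff pos exp_minus divide_inverse)

text \<open>Lower bound for the mass of a tensor superlevel set: the words over the head at
  level x carry mass psi(x)^d, and by Markov's inequality for the additive functional
  -ln of the product, at most d m(x) / t of it lies below height exp(-t).\<close>
lemma tensor_superlevel_mass_lower:
  assumes t: "0 < t"
  shows "head_mass x ^ d - real d * head_entropy x / t
           \<le> (\<Sum>a\<in>tensor_superlevel p d (exp (-t)). tensor_eig p a)"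
proof -
  let ?W = "words (head x) d" and ?A = "tensor_superlevel p d (exp (-t))"
  let ?P = "tensor_eig p" and ?Y = "\<lambda>ks. sum_list (map (\<lambda>k. - ln (p k)) ks)"
  have finW: "finite ?W" by (rule finite_words[OF finite_head])
  have Y_nonneg: "0 \<le> ?Y ks" for ks by (induction ks) (use neg_ln_nonneg in \<open>auto intro: order_trans[rotated]\<close>)
  have outside: "?P a \<le> ?P a * ?Y a / t" if "a \<in> ?W - ?A" for a
  proof -
    have "?P a < exp (-t)"
      using that unfolding tensor_superlevel_def words_def multi_indices_def by auto
    then have "1 \<le> ?Y a / t" using t unfolding tensor_eig_exp by simp
    then show ?thesis using tensor_pos[of a] mult_left_mono[of 1 "?Y a / t" "?P a"] by simp
  qed
  have "head_mass x ^ d = (\<Sum>a\<in>?W \<inter> ?A. ?P a) + (\<Sum>a\<in>?W - ?A. ?P a)"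
    unfolding head_mass_def sum_words_tensor[symmetric] by (rule sum.Int_Diff[OF finW])
  also have "(\<Sum>a\<in>?W \<inter> ?A. ?P a) \<le> (\<Sum>a\<in>?A. ?P a)"
    using finite_tensor_superlevel by (intro sum_mono2) (auto intro: less_imp_le tensor_pos)
  also have "(\<Sum>a\<in>?W - ?A. ?P a) \<le> (\<Sum>a\<in>?W. ?P a * ?Y a / t)"
  proof (intro order_trans[OF sum_mono sum_mono2])
    show "0 \<le> ?P a * ?Y a / t" for a
      using tensor_pos[of a] Y_nonneg[of a] t by simp
  qed (use outside finW in auto)
  also have "\<dots> = real d * head_mass x ^ (d - 1) * head_entropy x / t"
    unfolding head_mass_def head_entropy_def sum_divide_distrib[symmetric]
    by (simp add: sum_words_tensor_additive)
  also have "\<dots> \<le> real d * head_entropy x / t"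
    using head_mass_nonneg head_mass_le_one head_entropy_nonneg t
    by (intro divide_right_mono mult_right_mono) (auto simp: mult_left_le power_le_one)
  finally show ?thesis by simp
qed

end

lemma halving_induct:
  fixes P :: "real \<Rightarrow> bool"
  assumes a: "0 < a"
    and base: "\<And>x. a \<le> x \<Longrightarrow> x \<le> 2 * a \<Longrightarrow> P x"
    and step: "\<And>x. 2 * a \<le> x \<Longrightarrow> P (x / 2) \<Longrightarrow> P x"
    and x: "a \<le> x"
  shows "P x"
proof -
  have bounded: "\<forall>x. a \<le> x \<longrightarrow> x \<le> 2 ^ Suc n * a \<longrightarrow> P x" for n
  proof (induction n)
    case (Suc n)
    show ?case
    proof (intro allI impI)
      fix x assume "a \<le> x" and "x \<le> 2 ^ Suc (Suc n) * a"
      then show "P x" using Suc base step[of x] by (cases "x \<le> 2 * a") auto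
    qed
  qed (use base in simp)
  obtain n where "x / a < 2 ^ n" using real_arch_pow[of 2 "x / a"] by auto
  then have "x < 2 ^ n * a" using a by (simp add: field_simps)
  also have "\<dots> \<le> 2 ^ Suc n * a" using a by simp
  finally show ?thesis using bounded x by (meson less_imp_le)
qed

lemma doubling_growth_at_top:
  fixes g :: "real \<Rightarrow> real"
  assumes a: "0 < a" and c: "0 < c" and r: "1 < r"
    and base: "\<And>x. a \<le> x \<Longrightarrow> x \<le> 2 * a \<Longrightarrow> c \<le> g x"
    and step: "\<And>x. 2 * a \<le> x \<Longrightarrow> r * g (x / 2) \<le> g x"
  shows "filterlim g at_top at_top"
proof -
  have lower: "c \<le> g x" if "a \<le> x" for x
  proof (rule halving_induct[OF a base _ that])
    fix x assume "2 * a \<le> x" and "c \<le> g (x / 2)"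
    moreover have "g (x / 2) \<le> r * g (x / 2)" using \<open>c \<le> g (x / 2)\<close> c r by simp
    ultimately show "c \<le> g x" using step[of x] by linarith
  qed
  have grow: "\<forall>x. 2 ^ n * a \<le> x \<longrightarrow> r ^ n * c \<le> g x" for n
  proof (induction n)
    case (Suc n)
    show ?case
    proof (intro allI impI)
      fix x assume x: "2 ^ Suc n * a \<le> x"
      then have "r ^ n * c \<le> g (x / 2)" using Suc by simp
      moreover have "2 * a \<le> 2 ^ Suc n * a" using a by simp
      ultimately have "r * (r ^ n * c) \<le> r * g (x / 2)" and "r * g (x / 2) \<le> g x"
        using step[of x] r x by simp_all
      then show "r ^ Suc n * c \<le> g x" by (simp add: mult.assoc)
    qed
  qed (use lower in simp)
  show ?thesis
  proof (subst filterlim_at_top, intro allI)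
    fix Z
    obtain n where "Z / c < r ^ n" using real_arch_pow[OF r, of "Z / c"] by auto
    then have "Z \<le> r ^ n * c" using c by (simp add: field_simps)
    then show "eventually (\<lambda>x. Z \<le> g x) at_top"
      using grow[of n] by (intro eventually_at_top_linorderI[of "2 ^ n * a"]) auto
  qed
qed

lemma exp_le_one_minus_pow:
  fixes u b :: real
  assumes u: "0 \<le> u" "u \<le> 1/2" and du: "real d * u \<le> b"
  shows "exp (- b - 2 * b * u) \<le> (1 - u) ^ d"
proof -
  have "- b - 2 * b * u \<le> real d * (- u - 2 * u\<^sup>2)"
    using du mult_right_mono[OF du u(1)] by (simp add: power2_eq_square algebra_simps)
  also have "\<dots> \<le> real d * ln (1 - u)"
    using ln_one_minus_pos_lower_bound[OF u] by (intro mult_left_mono) auto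
  finally have "exp (- b - 2 * b * u) \<le> exp (ln (1 - u)) ^ d"
    by (simp add: exp_of_nat_mult[symmetric])
  then show ?thesis using u by simp
qed

text \<open>Choice of constants for the lower half: b slightly below -ln c0, and M so large that
  the Markov error term 4 b / M leaves room above c0 = exp(-(-ln c0)).\<close>
lemma lower_half_constants:
  fixes c0 \<gamma> :: real
  assumes c0: "0 < c0" "c0 < 1" and g: "0 < \<gamma>"
  obtains b M where "0 < b" "- ln c0 - \<gamma> < b" "0 < M" "c0 < exp (- b) - 4 * b / M"
proof -
  define b where "b = - ln c0 - min \<gamma> (- ln c0) / 2"
  have b: "0 < b" "b < - ln c0" "- ln c0 - \<gamma> < b"
    unfolding b_def using c0 g by (auto simp: min_def)
  then have "exp (ln c0) < exp (- b)" by (subst exp_less_cancel_iff) linarith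
  then have exp_b: "c0 < exp (- b)" using c0 by simp
  define M where "M = 8 * b / (exp (- b) - c0)"
  have "0 < M" "4 * b / M = (exp (- b) - c0) / 2" unfolding M_def using b exp_b by auto
  then show ?thesis using that b exp_b by auto
qed

locale slowly_varying_tail = pos_prob_seq +
  fixes \<phi> :: "real \<Rightarrow> real"
  assumes tail_eq: "\<And>x. 0 \<le> x \<Longrightarrow> \<phi> x = 1 - head_mass x"
    and tail_pos: "\<And>x. 0 \<le> x \<Longrightarrow> 0 < \<phi> x"
    and tail_sv: "\<And>c. 0 < c \<Longrightarrow> ((\<lambda>x. \<phi> (c * x) / \<phi> x) \<longlongrightarrow> 1) at_top"
begin

lemma tail_antimono: "0 \<le> x \<Longrightarrow> x \<le> y \<Longrightarrow> \<phi> y \<le> \<phi> x"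
  using tail_eq head_mass_mono by simp

lemma head_mass_less_one: "0 \<le> s \<Longrightarrow> head_mass s < 1"
  using tail_eq tail_pos by fastforce

lemma tail_tendsto_0: "(\<phi> \<longlongrightarrow> 0) at_top"
proof (rule order_tendstoI)
  fix e :: real assume "e < 0"
  then show "eventually (\<lambda>x. e < \<phi> x) at_top"
    using tail_pos by (intro eventually_at_top_linorderI[of 0]) (auto intro: less_trans)
next
  fix e :: real assume e: "0 < e"
  have "eventually (\<lambda>K. 1 - e < (\<Sum>k<K. p k)) sequentially"
    using summable_LIMSEQ[OF summable] sum_one e by (intro order_tendstoD) auto
  then obtain K where K: "1 - e < (\<Sum>k<K. p k)" by (auto simp: eventually_sequentially)
  define X where "X = (\<Sum>k<K. - ln (p k))"
  have "{..<K} \<subseteq> head x" if "X \<le> x" for x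
  proof
    fix k assume "k \<in> {..<K}"
    then have "- ln (p k) \<le> X"
      unfolding X_def by (intro member_le_sum neg_ln_nonneg) auto
    then have "exp (- x) \<le> exp (ln (p k))" using that by simp
    then show "k \<in> head x" using pos[of k] by (simp add: head_def)
  qed
  then have "(\<Sum>k<K. p k) \<le> head_mass x" if "X \<le> x" for x
    unfolding head_mass_def using that finite_head by (intro sum_mono2) (auto intro: less_imp_le pos)
  moreover have "0 \<le> X" unfolding X_def by (intro sum_nonneg neg_ln_nonneg)
  ultimately show "eventually (\<lambda>x. \<phi> x < e) at_top"
    using K tail_eq by (intro eventually_at_top_linorderI[of X]) fastforce
qed

lemma tail_sv_inverse: "0 < c \<Longrightarrow> ((\<lambda>x. \<phi> x / \<phi> (c * x)) \<longlongrightarrow> 1) at_top"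
  using tendsto_inverse[OF tail_sv[of c]] by simp

lemma tail_doubling: "\<exists>X\<ge>1. \<forall>x\<ge>X. \<phi> (x / 2) \<le> 5 / 4 * \<phi> x"
proof -
  have "eventually (\<lambda>x. \<phi> ((1/2) * x) / \<phi> x < 5/4) at_top"
    using tail_sv[of "1/2"] by (intro order_tendstoD) auto
  then obtain X where X: "\<And>x. X \<le> x \<Longrightarrow> \<phi> ((1/2) * x) / \<phi> x < 5/4"
    by (auto simp: eventually_at_top_linorder)
  have "\<phi> (x / 2) \<le> 5 / 4 * \<phi> x" if "max X 1 \<le> x" for x
    using X[of x] tail_pos[of x] that by (simp add: field_simps)
  then show ?thesis by (intro exI[of _ "max X 1"]) auto
qed

text \<open>Passing from level x/2 to level x adds weights with -ln p k \<le> x and total mass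
  at most phi(x/2).\<close>
lemma head_entropy_halving: "0 \<le> x \<Longrightarrow> head_entropy x \<le> head_entropy (x / 2) + x * \<phi> (x / 2)"
proof -
  assume x: "0 \<le> x"
  have sub: "head (x / 2) \<subseteq> head x" using x by (intro head_mono) simp
  have "head_entropy x = head_entropy (x / 2) + (\<Sum>k\<in>head x - head (x / 2). p k * - ln (p k))"
    unfolding head_entropy_def
    using sum.subset_diff[OF sub finite_head, of "\<lambda>k. p k * - ln (p k)"] by (simp add: add.commute)
  also have "(\<Sum>k\<in>head x - head (x / 2). p k * - ln (p k)) \<le> (\<Sum>k\<in>head x - head (x / 2). p k * x)"
    by (intro sum_mono head_neg_ln_le) auto
  also have "\<dots> = x * (head_mass x - head_mass (x / 2))"
    unfolding head_mass_def using sum.subset_diff[OF sub finite_head, of p]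
    by (simp add: sum_distrib_left mult.commute)
  also have "\<dots> \<le> x * \<phi> (x / 2)"
    using tail_eq[of "x / 2"] head_mass_le_one[of x] x by (intro mult_left_mono) auto
  finally show ?thesis by simp
qed

lemma head_entropy_bound: "\<exists>B\<ge>0. \<forall>x\<ge>0. head_entropy x \<le> 4 * x * \<phi> x + B"
proof -
  obtain X where X: "1 \<le> X" and halve: "\<And>x. X \<le> x \<Longrightarrow> \<phi> (x / 2) \<le> 5 / 4 * \<phi> x"
    using tail_doubling by auto
  let ?P = "\<lambda>x. head_entropy x \<le> 4 * x * \<phi> x + 2 * X"
  have small: "?P x" if "0 \<le> x" "x \<le> 2 * X" for x
  proof -
    have "0 \<le> 4 * x * \<phi> x" using tail_pos[of x] that by simp
    then show ?thesis using head_entropy_le[of x] that by linarith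
  qed
  have "?P x" if "X \<le> x" for x
  proof (rule halving_induct[where P="?P", OF _ _ _ that])
    fix x assume x: "2 * X \<le> x" and IH: "?P (x / 2)"
    have "head_entropy x \<le> 3 * x * \<phi> (x / 2) + 2 * X"
      using head_entropy_halving[of x] IH x X by simp
    also have "\<dots> \<le> 3 * x * (5 / 4 * \<phi> x) + 2 * X"
      using halve[of x] x X by (intro add_right_mono mult_left_mono) auto
    also have "\<dots> \<le> 4 * x * \<phi> x + 2 * X"
      using x X tail_pos[of x] by simp
    finally show "?P x" .
  qed (use X small in auto)
  then have "?P x" if "0 \<le> x" for x using small that by (cases "X \<le> x") auto
  then show ?thesis using X by (intro exI[of _ "2 * X"]) auto
qed

text \<open>x phi(x) grows by the factor 8/5 under doubling, hence tends to infinity.\<close>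
lemma x_tail_at_top: "filterlim (\<lambda>x. x * \<phi> x) at_top at_top"
proof -
  obtain X where X: "1 \<le> X" and halve: "\<And>x. X \<le> x \<Longrightarrow> \<phi> (x / 2) \<le> 5 / 4 * \<phi> x"
    using tail_doubling by auto
  show ?thesis
  proof (rule doubling_growth_at_top[where a=X and c="X * \<phi> (2 * X)" and r="8/5"])
    show "X * \<phi> (2 * X) \<le> x * \<phi> x" if "X \<le> x" "x \<le> 2 * X" for x
      using that X tail_antimono[of x "2 * X"] tail_pos[of "2 * X"] by (intro mult_mono) auto
    show "8 / 5 * (x / 2 * \<phi> (x / 2)) \<le> x * \<phi> x" if "2 * X \<le> x" for x
      using halve[of x] that X by (simp add: field_simps)
  qed (use X tail_pos[of "2 * X"] in auto)
qed

lemma tail_shift_ratio: "((\<lambda>x. \<phi> x / \<phi> (x - 1)) \<longlongrightarrow> 1) at_top"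
proof (rule tendsto_sandwich[OF _ _ tail_sv_inverse[of "1/2"] tendsto_const])
  have "\<phi> x / \<phi> ((1/2) * x) \<le> \<phi> x / \<phi> (x - 1) \<and> \<phi> x / \<phi> (x - 1) \<le> 1" if "2 \<le> x" for x
    using that tail_pos[of x] tail_pos[of "x - 1"] tail_antimono[of "(1/2) * x" "x - 1"]
      tail_antimono[of "x - 1" x]
    by (auto intro!: divide_left_mono)
  then have ev: "eventually (\<lambda>x. \<phi> x / \<phi> ((1/2) * x) \<le> \<phi> x / \<phi> (x - 1) \<and> \<phi> x / \<phi> (x - 1) \<le> 1) at_top"
    by (intro eventually_at_top_linorderI[of 2]) blast
  show "eventually (\<lambda>x. \<phi> x / \<phi> ((1/2) * x) \<le> \<phi> x / \<phi> (x - 1)) at_top"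
    using ev by eventually_elim blast
  show "eventually (\<lambda>x. \<phi> x / \<phi> (x - 1) \<le> 1) at_top"
    using ev by eventually_elim blast
qed simp

lemma n_eps_ge_one:
  assumes arr: "decr_arrangement (tensor_eig p) (multi_indices d) q"
    and e: "0 < \<epsilon>" "\<epsilon> < 1"
  shows "1 \<le> n_eps q \<epsilon>"
proof (rule ccontr)
  assume "\<not> 1 \<le> n_eps q \<epsilon>"
  then have "n_eps q \<epsilon> = 0" by simp
  moreover have "\<epsilon>\<^sup>2 < 1" using e by (simp add: power_less_one_iff)
  ultimately show False
    using n_eps_covers[OF tensor_arrangement_summable[OF arr] tensor_arrangement_suminf[OF arr] e(1)]
    by simp
qed

lemma head_mass_pow_le: "0 \<le> s \<Longrightarrow> head_mass s ^ d \<le> exp (- (real d * \<phi> s))"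
proof -
  assume s: "0 \<le> s"
  have "head_mass s ^ d \<le> exp (- \<phi> s) ^ d"
    using tail_eq[OF s] head_mass_nonneg exp_ge_add_one_self[of "- \<phi> s"] by (intro power_mono) auto
  then show ?thesis by (simp add: exp_of_nat_mult[symmetric])
qed

text \<open>n(eps) grows without bound as d \<rightarrow> \<infinity>, since the tensor superlevel masses
  at any fixed height vanish.\<close>
lemma n_eps_at_top:
  assumes arr: "\<And>d. decr_arrangement (tensor_eig p) (multi_indices d) (q d)"
    and e: "0 < \<epsilon>" "\<epsilon> < 1"
  shows "filterlim (\<lambda>d. real (n_eps (q d) \<epsilon>)) at_top sequentially"
proof (subst filterlim_at_top, intro allI)
  fix Z :: real
  define c0 where "c0 = 1 - \<epsilon>\<^sup>2"
  have c0: "0 < c0" unfolding c0_def using e by (simp add: power_less_one_iff)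
  define s where "s = ln (max 1 (2 * Z / c0))"
  have s: "0 \<le> s" "2 * Z / c0 \<le> exp s" unfolding s_def by auto
  have "(\<lambda>d. head_mass s ^ d) \<longlonglongrightarrow> 0"
    using head_mass_less_one[OF s(1)] head_mass_nonneg by (intro LIMSEQ_power_zero) simp
  then have "eventually (\<lambda>d. head_mass s ^ d < c0 / 2) sequentially"
    using c0 by (intro order_tendstoD) auto
  then show "eventually (\<lambda>d. Z \<le> real (n_eps (q d) \<epsilon>)) sequentially"
  proof eventually_elim
    case (elim d)
    have "c0 \<le> real (n_eps (q d) \<epsilon>) * exp (-s) + head_mass s ^ d"
      using n_eps_lower[OF arr[of d] e(1) exp_gt_zero[of "-s"]] tensor_superlevel_mass_head[of d s]
      unfolding c0_def by simp
    then have "c0 / 2 \<le> real (n_eps (q d) \<epsilon>) * exp (-s)" using elim by simp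
    then have "c0 / 2 * exp s \<le> real (n_eps (q d) \<epsilon>)" by (simp add: exp_minus field_simps)
    moreover have "Z \<le> c0 / 2 * exp s" using s c0 by (simp add: field_simps)
    ultimately show ?case by linarith
  qed
qed

text \<open>Evaluating the lower bound for n(eps) at height 1/n(eps)^2 gives an upper bound
  for d phi(2 ln n(eps)).\<close>
lemma tail_twice_log_bound:
  assumes arr: "decr_arrangement (tensor_eig p) (multi_indices d) q"
    and e: "0 < \<epsilon>" "\<epsilon> < 1"
    and small: "inverse (real (n_eps q \<epsilon>)) < 1 - \<epsilon>\<^sup>2"
  shows "real d * \<phi> (2 * ln (real (n_eps q \<epsilon>))) \<le> - ln (1 - \<epsilon>\<^sup>2 - inverse (real (n_eps q \<epsilon>)))"
proof -
  define n where "n = real (n_eps q \<epsilon>)"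
  define s where "s = 2 * ln n"
  have n: "1 \<le> n" unfolding n_def using n_eps_ge_one[OF arr e] by simp
  have s: "0 \<le> s" unfolding s_def using n by simp
  have "exp s = exp (ln n) * exp (ln n)" unfolding s_def by (simp add: exp_add[symmetric])
  then have "n * exp (-s) = inverse n" using n by (simp add: exp_minus)
  then have "1 - \<epsilon>\<^sup>2 - inverse n \<le> exp (- (real d * \<phi> s))"
    using n_eps_lower[OF arr e(1) exp_gt_zero[of "-s"]] tensor_superlevel_mass_head[of d s]
      head_mass_pow_le[OF s, of d] unfolding n_def by linarith
  then have "ln (1 - \<epsilon>\<^sup>2 - inverse n) \<le> - (real d * \<phi> s)"
    using small unfolding n_def by (metis diff_gt_0_iff_gt ln_exp ln_le_cancel_iff exp_gt_zero)
  then show ?thesis unfolding n_def s_def by simp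
qed

lemma limsup_half:
  assumes arr: "\<And>d. decr_arrangement (tensor_eig p) (multi_indices d) (q d)"
    and e: "0 < \<epsilon>" "\<epsilon> < 1" and g: "0 < \<gamma>"
  shows "eventually (\<lambda>d. real d * \<phi> (ln (real (n_eps (q d) \<epsilon>))) < - ln (1 - \<epsilon>\<^sup>2) + \<gamma>) sequentially"
proof -
  define n where "n d = real (n_eps (q d) \<epsilon>)" for d
  define c0 where "c0 = 1 - \<epsilon>\<^sup>2"
  have c0: "0 < c0" unfolding c0_def using e by (simp add: power_less_one_iff)
  have n_top: "filterlim n at_top sequentially"
    unfolding n_def by (rule n_eps_at_top[OF arr e])
  have inv_n: "(\<lambda>d. inverse (n d)) \<longlonglongrightarrow> 0" by (rule tendsto_inverse_0_at_top[OF n_top])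
  have "(\<lambda>d. - ln (c0 - inverse (n d))) \<longlonglongrightarrow> - ln (c0 - 0)"
    using c0 by (intro tendsto_intros inv_n) auto
  moreover have "(\<lambda>d. \<phi> (ln (n d)) / \<phi> (2 * ln (n d))) \<longlonglongrightarrow> 1"
    by (rule filterlim_compose[OF tail_sv_inverse filterlim_compose[OF ln_at_top n_top]]) simp
  ultimately have "(\<lambda>d. - ln (c0 - inverse (n d)) * (\<phi> (ln (n d)) / \<phi> (2 * ln (n d)))) \<longlonglongrightarrow> - ln c0 * 1"
    by (intro tendsto_mult) auto
  then have "eventually (\<lambda>d. - ln (c0 - inverse (n d)) * (\<phi> (ln (n d)) / \<phi> (2 * ln (n d))) < - ln c0 + \<gamma>) sequentially"
    using g by (intro order_tendstoD) auto
  moreover have "eventually (\<lambda>d. inverse (n d) < c0) sequentially"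
    using inv_n c0 by (intro order_tendstoD) auto
  ultimately show ?thesis
  proof eventually_elim
    case (elim d)
    have L: "0 \<le> ln (n d)" unfolding n_def using n_eps_ge_one[OF arr e, of d] by simp
    have bound: "real d * \<phi> (2 * ln (n d)) \<le> - ln (c0 - inverse (n d))"
      using tail_twice_log_bound[OF arr e] elim(2) unfolding n_def c0_def by simp
    have "real d * \<phi> (ln (n d)) = real d * \<phi> (2 * ln (n d)) * (\<phi> (ln (n d)) / \<phi> (2 * ln (n d)))"
      using tail_pos[of "2 * ln (n d)"] L by simp
    also have "\<dots> \<le> - ln (c0 - inverse (n d)) * (\<phi> (ln (n d)) / \<phi> (2 * ln (n d)))"
      using bound tail_pos L by (intro mult_right_mono) (auto intro: less_imp_le)
    finally show ?case using elim(1) unfolding n_def c0_def by linarith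
  qed
qed

lemma tail_threshold:
  assumes b: "0 < b"
  obtains N :: "nat \<Rightarrow> nat" where "filterlim N at_top sequentially"
    and "\<And>d. real d * \<phi> (real (N d)) \<le> b"
    and "\<And>d. 0 < N d \<Longrightarrow> b < real d * \<phi> (real (N d) - 1)"
proof
  define N where "N d = (LEAST N::nat. real d * \<phi> (real N) \<le> b)" for d
  have "\<exists>N::nat. real d * \<phi> (real N) \<le> b" for d
  proof -
    have "(\<lambda>N. real d * \<phi> (real N)) \<longlonglongrightarrow> real d * 0"
      by (intro tendsto_mult tendsto_const filterlim_compose[OF tail_tendsto_0 filterlim_real_sequentially])
    then have "eventually (\<lambda>N. real d * \<phi> (real N) < b) sequentially"
      using b by (intro order_tendstoD) auto
    then show ?thesis by (meson eventually_sequentially less_imp_le order_refl)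
  qed
  then show below: "real d * \<phi> (real (N d)) \<le> b" for d
    unfolding N_def by (rule LeastI_ex)
  have above: "b < real d * \<phi> (real M)" if "M < N d" for d M
    using not_less_Least[of M "\<lambda>N. real d * \<phi> (real N) \<le> b"] that unfolding N_def by simp
  then show "0 < N d \<Longrightarrow> b < real d * \<phi> (real (N d) - 1)" for d
    using above[of "N d - 1" d] by simp
  show "filterlim N at_top sequentially"
  proof (subst filterlim_at_top, intro allI)
    fix Z :: nat
    have "eventually (\<lambda>d. b < real d * \<phi> (real M)) sequentially" for M
    proof -
      have "filterlim (\<lambda>d. \<phi> (real M) * real d) at_top sequentially"
        using tail_pos[of "real M"]
        by (intro filterlim_tendsto_pos_mult_at_top tendsto_const filterlim_real_sequentially) auto
      then show ?thesis by (simp add: filterlim_at_top_dense mult.commute)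
    qed
    then have "eventually (\<lambda>d. \<forall>M\<in>{..<Z}. b < real d * \<phi> (real M)) sequentially"
      by (intro eventually_ball_finite) auto
    then show "eventually (\<lambda>d. Z \<le> N d) sequentially"
      by eventually_elim (use below in \<open>force simp: not_le[symmetric]\<close>)
  qed
qed

text \<open>Evaluating the upper bound for n(eps) at t = M X, with the head mass at level X
  bounded below and the truncated entropy bounded above, gives ln n(eps) \<le> M X.\<close>
lemma ln_n_eps_le:
  assumes arr: "decr_arrangement (tensor_eig p) (multi_indices d) q"
    and B: "\<And>x. 0 \<le> x \<Longrightarrow> head_entropy x \<le> 4 * x * \<phi> x + B"
    and X: "0 < X" and half: "\<phi> X \<le> 1/2" and du: "real d * \<phi> X \<le> b" and M: "0 < M"
    and covers: "1 - \<epsilon>\<^sup>2 \<le> exp (- b - 2 * b * \<phi> X) - 4 * b / M - B * b / M * inverse (X * \<phi> X)"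
  shows "ln (real (n_eps q \<epsilon>)) \<le> M * X"
proof -
  have u: "0 < \<phi> X" using tail_pos X by simp
  have "exp (- b - 2 * b * \<phi> X) \<le> head_mass X ^ d"
    using exp_le_one_minus_pow[OF less_imp_le[OF u] half du] tail_eq[of X] X by simp
  moreover have "real d * head_entropy X / (M * X) \<le> 4 * b / M + B * b / M * inverse (X * \<phi> X)"
  proof -
    have "real d * head_entropy X \<le> 4 * X * (real d * \<phi> X) + B * (real d * \<phi> X) / \<phi> X"
      using mult_left_mono[OF B[of X], of "real d"] X u by (simp add: algebra_simps)
    also have "\<dots> \<le> 4 * X * b + B * b / \<phi> X"
      using du X u B[of 0] head_entropy_nonneg[of 0] tail_pos[of 0]
      by (intro add_mono mult_left_mono divide_right_mono mult_right_mono) auto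
    finally show ?thesis using M X u by (simp add: field_simps)
  qed
  ultimately have "1 - \<epsilon>\<^sup>2 \<le> (\<Sum>a\<in>tensor_superlevel p d (exp (- (M * X))). tensor_eig p a)"
    using covers tensor_superlevel_mass_lower[of "M * X" X d] M X by simp
  then have "real (n_eps q \<epsilon>) \<le> exp (M * X)" by (rule n_eps_le_exp[OF arr])
  then show ?thesis
    using X M by (cases "n_eps q \<epsilon> = 0") (auto simp: ln_le_cancel_iff[symmetric])
qed

text \<open>The final comparison in the lower half: if d phi(X - 1) exceeds b and
  0 \<le> L \<le> M X, then d phi(L) exceeds b times the two ratios that slow variation sends to 1.\<close>
lemma tail_ratio_lower:
  assumes X: "1 \<le> X" and M: "0 < M" and above: "b < real d * \<phi> (X - 1)"
    and L: "0 \<le> L" "L \<le> M * X"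
  shows "b * (\<phi> X / \<phi> (X - 1)) * (\<phi> (M * X) / \<phi> X) \<le> real d * \<phi> L"
proof -
  have pos: "0 < \<phi> X" "0 < \<phi> (X - 1)" "0 < \<phi> (M * X)"
    using tail_pos X M by auto
  have "b * (\<phi> X / \<phi> (X - 1)) * (\<phi> (M * X) / \<phi> X) = b * \<phi> (M * X) / \<phi> (X - 1)"
    using pos by simp
  also have "\<dots> \<le> real d * \<phi> (X - 1) * \<phi> (M * X) / \<phi> (X - 1)"
    using above pos by (intro divide_right_mono mult_right_mono) auto
  also have "\<dots> = real d * \<phi> (M * X)" using pos by simp
  also have "\<dots> \<le> real d * \<phi> L" using tail_antimono[OF L] by (intro mult_left_mono) auto
  finally show ?thesis .
qed

text \<open>With b slightly below -ln(1 - eps^2) and X the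
  threshold level N(d), the level M X with M large covers mass 1 - eps^2, so
  ln n(eps) \<le> M X, and slow variation turns d phi(X - 1) > b into d phi(M X) \<approx> b.\<close>
lemma liminf_half:
  assumes arr: "\<And>d. decr_arrangement (tensor_eig p) (multi_indices d) (q d)"
    and e: "0 < \<epsilon>" "\<epsilon> < 1" and g: "0 < \<gamma>"
  shows "eventually (\<lambda>d. - ln (1 - \<epsilon>\<^sup>2) - \<gamma> < real d * \<phi> (ln (real (n_eps (q d) \<epsilon>)))) sequentially"
proof -
  define c0 where "c0 = 1 - \<epsilon>\<^sup>2"
  have c0: "0 < c0" "c0 < 1" unfolding c0_def using e by (auto simp: power_less_one_iff)
  obtain b M where b: "0 < b" "- ln c0 - \<gamma> < b" and M: "0 < M"
    and cover: "c0 < exp (- b) - 4 * b / M"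
    using lower_half_constants[OF c0 g] by blast
  obtain B where B: "\<And>x. 0 \<le> x \<Longrightarrow> head_entropy x \<le> 4 * x * \<phi> x + B"
    using head_entropy_bound by auto
  obtain N where N_top: "filterlim N at_top sequentially"
    and below: "\<And>d. real d * \<phi> (real (N d)) \<le> b"
    and above: "\<And>d. 0 < N d \<Longrightarrow> b < real d * \<phi> (real (N d) - 1)"
    using tail_threshold[OF b(1)] by blast
  define X where "X d = real (N d)" for d
  have X_top: "filterlim X at_top sequentially"
    unfolding X_def by (rule filterlim_compose[OF filterlim_real_sequentially N_top])
  have tail_X: "(\<lambda>d. \<phi> (X d)) \<longlonglongrightarrow> 0" by (rule filterlim_compose[OF tail_tendsto_0 X_top])
  have "(\<lambda>d. exp (- b - 2 * b * \<phi> (X d)) - 4 * b / M - B * b / M * inverse (X d * \<phi> (X d)))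
          \<longlonglongrightarrow> exp (- b - 2 * b * 0) - 4 * b / M - B * b / M * 0"
    by (intro tendsto_intros tail_X tendsto_inverse_0_at_top filterlim_compose[OF x_tail_at_top X_top])
  moreover have "c0 < exp (- b - 2 * b * 0) - 4 * b / M - B * b / M * 0" using cover by simp
  ultimately have ev_cover: "eventually (\<lambda>d. c0 < exp (- b - 2 * b * \<phi> (X d)) - 4 * b / M
      - B * b / M * inverse (X d * \<phi> (X d))) sequentially"
    by (rule order_tendstoD)
  have "(\<lambda>d. b * (\<phi> (X d) / \<phi> (X d - 1)) * (\<phi> (M * X d) / \<phi> (X d))) \<longlonglongrightarrow> b * 1 * 1"
    by (intro tendsto_mult tendsto_const filterlim_compose[OF tail_shift_ratio X_top]
        filterlim_compose[OF tail_sv[OF M] X_top])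
  then have ev_ratio: "eventually (\<lambda>d. - ln c0 - \<gamma> < b * (\<phi> (X d) / \<phi> (X d - 1)) * (\<phi> (M * X d) / \<phi> (X d))) sequentially"
    using b by (intro order_tendstoD) auto
  have "eventually (\<lambda>d. \<phi> (X d) < 1/2) sequentially"
    using tail_X by (rule order_tendstoD) simp
  moreover have "eventually (\<lambda>d. 1 \<le> X d) sequentially"
    using X_top by (simp add: filterlim_at_top)
  ultimately have ev_large: "eventually (\<lambda>d. 1 \<le> X d \<and> \<phi> (X d) \<le> 1/2) sequentially"
    by eventually_elim simp
  show ?thesis
    using ev_cover ev_ratio ev_large
  proof eventually_elim
    case (elim d)
    let ?n = "real (n_eps (q d) \<epsilon>)"
    have X: "0 < X d" "0 < N d" using elim(3) unfolding X_def by auto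
    have "ln ?n \<le> M * X d"
      using ln_n_eps_le[OF arr B X(1) _ below[of d, folded X_def] M] elim unfolding c0_def by auto
    then have "b * (\<phi> (X d) / \<phi> (X d - 1)) * (\<phi> (M * X d) / \<phi> (X d)) \<le> real d * \<phi> (ln ?n)"
      using tail_ratio_lower[OF elim(3)[THEN conjunct1] M above[OF X(2), folded X_def]]
        n_eps_ge_one[OF arr e, of d] by simp
    then show ?case using elim(2) unfolding c0_def by linarith
  qed
qed

theorem tail_log_n_eps_tendsto:
  assumes arr: "\<And>d. decr_arrangement (tensor_eig p) (multi_indices d) (q d)"
    and e: "0 < \<epsilon>" "\<epsilon> < 1"
  shows "((\<lambda>d. real d * \<phi> (ln (real (n_eps (q d) \<epsilon>)))) \<longlongrightarrow> - ln (1 - \<epsilon>\<^sup>2)) sequentially"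
proof (rule order_tendstoI)
  fix y assume "y < - ln (1 - \<epsilon>\<^sup>2)"
  then show "eventually (\<lambda>d. y < real d * \<phi> (ln (real (n_eps (q d) \<epsilon>)))) sequentially"
    using liminf_half[OF arr e, of "- ln (1 - \<epsilon>\<^sup>2) - y"] by simp
next
  fix y assume "- ln (1 - \<epsilon>\<^sup>2) < y"
  then show "eventually (\<lambda>d. real d * \<phi> (ln (real (n_eps (q d) \<epsilon>))) < y) sequentially"
    using limsup_half[OF arr e, of "y + ln (1 - \<epsilon>\<^sup>2)"] by simp
qed

end

lemma arrangement_scale:
  assumes arr: "decr_arrangement f A m" and c: "0 < c"
    and g: "\<And>a. a \<in> A \<Longrightarrow> g a = f a / c"
  shows "decr_arrangement g A (\<lambda>k. m k / c)"
proof -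
  have "{k. m k / c = v} \<approx> {a\<in>A. g a = v}" if "0 < v" for v
  proof -
    have "{k. m k / c = v} = {k. m k = v * c}" "{a\<in>A. g a = v} = {a\<in>A. f a = v * c}"
      using c by (auto simp: g field_simps)
    then show ?thesis using arr that c unfolding decr_arrangement_def by simp
  qed
  then show ?thesis
    using arr c unfolding decr_arrangement_def decseq_def by (auto intro: divide_right_mono)
qed

lemma tensor_eig_divide: "tensor_eig (\<lambda>k. lam k / c) a = tensor_eig lam a / c ^ length a"
  unfolding tensor_eig_def by (induction a) auto

lemma (in pos_prob_seq) normalized_tensor_arrangement:
  assumes p_def: "p = normalize_eigs lam"
    and nonneg: "\<And>k. 0 \<le> lam k" and summ: "summable lam"
    and arr: "decr_arrangement (tensor_eig lam) (multi_indices d) m"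
  shows "decr_arrangement (tensor_eig p) (multi_indices d) (normalize_eigs m)"
proof -
  define L where "L = suminf lam"
  have "L \<noteq> 0" using pos[of 0] unfolding p_def normalize_eigs_def L_def by auto
  moreover have "0 \<le> L" unfolding L_def using suminf_nonneg[OF summ nonneg] .
  ultimately have L: "0 < L" by simp
  have p_eq: "p = (\<lambda>k. lam k / L)" unfolding p_def normalize_eigs_def L_def ..
  have scaled: "decr_arrangement (tensor_eig p) (multi_indices d) (\<lambda>k. m k / L ^ d)"
    using L by (intro arrangement_scale[OF arr])
      (auto simp: p_eq tensor_eig_divide multi_indices_def)
  have "summable (\<lambda>k. m k / L ^ d)" by (rule tensor_arrangement_summable[OF scaled])
  then have "suminf m = L ^ d"
    using tensor_arrangement_suminf[OF scaled] L suminf_divide[of m "L ^ d"] by simp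
  then have "normalize_eigs m = (\<lambda>k. m k / L ^ d)" by (simp add: normalize_eigs_def fun_eq_iff)
  then show ?thesis using scaled by simp
qed

text \<open>A nonnegative nonincreasing sequence whose mass below exp(-x) stays positive for
  all large x has no zero term: otherwise only finitely many terms are nonzero, and
  that mass vanishes once exp(-x) drops below all of them.\<close>
lemma pos_if_tail_mass_pos:
  fixes p :: "nat \<Rightarrow> real"
  assumes dec: "decseq p" and nonneg: "\<And>k. 0 \<le> p k"
    and tail: "eventually (\<lambda>x. 0 < (\<Sum>k. if p k < exp (- x) then p k else 0)) at_top"
  shows "0 < p K"
proof (rule ccontr)
  assume "\<not> 0 < p K"
  then have zero: "p K = 0" using nonneg[of K] by simp
  have "eventually (\<lambda>x. exp (- x) \<le> p k) at_top" if "0 < p k" for k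
  proof (rule eventually_at_top_linorderI[of "- ln (p k)"])
    fix x assume "- ln (p k) \<le> x"
    then have "exp (- x) \<le> exp (ln (p k))" by simp
    then show "exp (- x) \<le> p k" using that by simp
  qed
  then have "eventually (\<lambda>x. \<forall>k\<in>{k. k < K \<and> 0 < p k}. exp (- x) \<le> p k) at_top"
    by (intro eventually_ball_finite) auto
  with tail have "eventually (\<lambda>x::real. False) at_top"
  proof eventually_elim
    case (elim x)
    have "(if p k < exp (- x) then p k else 0) = 0" for k
    proof (cases "k < K \<and> 0 < p k")
      case False
      then have "p k = 0" using decseqD[OF dec, of K k] zero nonneg[of k] by (cases "k < K") auto
      then show ?thesis by auto
    qed (use elim in auto)
    then show ?case using elim by simp
  qed
  then show False by simp
qed

lemma (in pos_prob_seq) tail_sum_eq: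
  "(\<Sum>k. if p k < exp (- x) then p k else 0) = 1 - head_mass x"
proof -
  have "(\<lambda>k. if p k < exp (- x) then p k else 0) = (\<lambda>k. p k - (if k \<in> head x then p k else 0))"
    by (auto simp: head_def)
  moreover have "(\<lambda>k. p k - (if k \<in> head x then p k else 0)) sums (1 - head_mass x)"
    unfolding head_mass_def
    using sums_diff[OF summable_sums[OF summable] sums_If_finite_set[OF finite_head]] sum_one
    by simp
  ultimately show ?thesis using sums_unique by metis
qed

text \<open>The hypotheses of the theorem place the normalised eigenvalues in the setting of
  the locale; in particular all eigenvalues are positive, since otherwise phi would
  eventually vanish.\<close>
lemma normalized_slowly_varying_tail:
  fixes lam :: "nat \<Rightarrow> real" and \<phi> :: "real \<Rightarrow> real"
  assumes nonneg: "\<And>k. 0 \<le> lam k" and decr: "decseq lam" and summ: "summable lam"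
    and pos: "0 < lam 0" and sv: "slowly_varying \<phi>"
    and phi_def: "\<And>x. 0 \<le> x \<Longrightarrow>
        (\<Sum>k. if normalize_eigs lam k < exp (- x) then normalize_eigs lam k else 0) = \<phi> x"
  shows "slowly_varying_tail (normalize_eigs lam) \<phi>"
proof -
  define L where "L = suminf lam"
  define p where "p = normalize_eigs lam"
  have "lam 0 \<le> L" unfolding L_def using sum_le_suminf[OF summ, of "{0}"] nonneg by simp
  then have L: "0 < L" using pos by simp
  have p_eq: "p = (\<lambda>k. lam k / L)" unfolding p_def normalize_eigs_def L_def by simp
  have phi_sum: "(\<Sum>k. if p k < exp (- x) then p k else 0) = \<phi> x" if "0 \<le> x" for x
    using phi_def[OF that] unfolding p_def .
  obtain T where T: "\<And>x. T \<le> x \<Longrightarrow> 0 < \<phi> x"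
    and svlim: "\<And>c. 0 < c \<Longrightarrow> ((\<lambda>x. \<phi> (c * x) / \<phi> x) \<longlongrightarrow> 1) at_top"
    using sv unfolding slowly_varying_def by blast
  have "0 < p k" for k
  proof (rule pos_if_tail_mass_pos)
    show "decseq p" using decr L unfolding p_eq decseq_def by (auto intro: divide_right_mono)
    show "0 \<le> p j" for j using nonneg[of j] L unfolding p_eq by simp
    show "eventually (\<lambda>x. 0 < (\<Sum>k. if p k < exp (- x) then p k else 0)) at_top"
      using T phi_sum by (intro eventually_at_top_linorderI[of "max 0 T"]) auto
  qed
  moreover have "summable p" unfolding p_eq using summ by simp
  moreover have "suminf p = 1" unfolding p_eq using suminf_divide[OF summ, of L] L L_def by simp
  ultimately interpret pos_prob_seq p by unfold_locales
  have tail: "\<phi> x = 1 - head_mass x" if "0 \<le> x" for x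
    using phi_sum[OF that] tail_sum_eq by simp
  have "0 < \<phi> x" if "0 \<le> x" for x
    using tail[OF that] tail[of "max x T"] T[of "max x T"] head_mass_mono[of x "max x T"] that by simp
  then show ?thesis unfolding p_def[symmetric] by unfold_locales (use tail svlim in auto)
qed

theorem theorem9:
  fixes lam :: "nat \<Rightarrow> real" and \<phi> :: "real \<Rightarrow> real" and mu :: "nat \<Rightarrow> nat \<Rightarrow> real"
  assumes nonneg: "\<And>k. 0 \<le> lam k"
    and decr: "decseq lam"
    and summ: "summable lam"
    and pos: "0 < lam 0"
    and mu: "\<And>d. decr_arrangement (tensor_eig lam) (multi_indices d) (mu d)"
    and sv: "slowly_varying \<phi>"
    and phi_def: "\<And>x. 0 \<le> x \<Longrightarrow>
        (\<Sum>k. if normalize_eigs lam k < exp (- x) then normalize_eigs lam k else 0) = \<phi> x"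
  shows "\<forall>\<epsilon>. 0 < \<epsilon> \<and> \<epsilon> < 1 \<longrightarrow>
     ((\<lambda>d. real d * \<phi> (ln (real (n_eps (normalize_eigs (mu d)) \<epsilon>))))
        \<longlongrightarrow> - ln (1 - \<epsilon>\<^sup>2)) sequentially"
proof (intro allI impI)
  fix \<epsilon> :: real
  assume e: "0 < \<epsilon> \<and> \<epsilon> < 1"
  interpret slowly_varying_tail "normalize_eigs lam" \<phi>
    by (rule normalized_slowly_varying_tail[OF nonneg decr summ pos sv phi_def])
  have arr: "\<And>d. decr_arrangement (tensor_eig (normalize_eigs lam)) (multi_indices d)
      (normalize_eigs (mu d))"
    by (rule normalized_tensor_arrangement[OF refl nonneg summ mu])
  show "((\<lambda>d. real d * \<phi> (ln (real (n_eps (normalize_eigs (mu d)) \<epsilon>)))) \<longlongrightarrow> - ln (1 - \<epsilon>\<^sup>2)) sequentially"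
    by (rule tail_log_n_eps_tendsto[OF arr]) (use e in auto)
qed

end
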